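(* Fix $p\in(2,\infty)$, $\alpha\in(0,1)$, $m,n\in\mathbb N$ and $k\in\{1,\ldots,n\}$. Suppose that every $f:\mathbb Z_{2m}^n\to\mathbb R$ satisfies $$\frac{\alpha^p}{\binom nk}\sum_{\substack{S\subset\{1,\ldots,n\}\\|S|=k}}\frac{\mathbb E\big[|f(x+m\varepsilon_S)-f(x)|^p\big]}{m^p}\le \frac kn\sum_{j=1}^n\mathbb E\big[|f(x+e_j)-f(x)|^p\big]+\Big(\frac kn\Big)^{p/2}\mathbb E\big[|f(x+\varepsilon)-f(x)|^p\big],$$ where the expectations are with respect to $(x,\varepsilon)\in\mathbb Z_{2m}^n\times\{-1,1\}^n$ chosen uniformly at random. Then $$k\ge\Big(\frac5\alpha\Big)^{\frac{2p}{p-2}}\implies m\ge\frac\alpha3\sqrt{\frac nk}.$$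
   Context: $\mathbb Z_M^n=(\mathbb Z/M\mathbb Z)^n$, with integer vectors added modulo $M$ coordinatewise. $e_1,\ldots,e_n$ is the standard basis of $\mathbb R^n$, and for $S\subset\{1,\ldots,n\}$ and $\varepsilon\in\{-1,1\}^n$, $\varepsilon_S=\sum_{j\in S}\varepsilon_je_j$. *)

theory Defs
  imports "HOL-Analysis.Analysis"
begin

text \<open>Points of Z_{2m}^n: functions on the index set {0..<n} (coordinates 1..n shifted
  to 0..n-1) with values in the residues {0..<2m}.\<close>
definition torus :: "nat \<Rightarrow> nat \<Rightarrow> (nat \<Rightarrow> int) set" where
  "torus n m = PiE {..<n} (\<lambda>_. {0..<2 * int m})"

definition signs :: "nat \<Rightarrow> (nat \<Rightarrow> int) set" where
  "signs n = PiE {..<n} (\<lambda>_. {-1, 1})"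

definition addm :: "nat \<Rightarrow> nat \<Rightarrow> (nat \<Rightarrow> int) \<Rightarrow> (nat \<Rightarrow> int) \<Rightarrow> (nat \<Rightarrow> int)" where
  "addm n m x y = (\<lambda>i. if i < n then (x i + y i) mod (2 * int m) else undefined)"

definition basisv :: "nat \<Rightarrow> (nat \<Rightarrow> int)" where
  "basisv j = (\<lambda>i. if i = j then 1 else 0)"

definition epsS :: "nat set \<Rightarrow> (nat \<Rightarrow> int) \<Rightarrow> (nat \<Rightarrow> int)" where
  "epsS S e = (\<lambda>i. if i \<in> S then e i else 0)"

definition Exp :: "nat \<Rightarrow> nat \<Rightarrow> ((nat \<Rightarrow> int) \<Rightarrow> (nat \<Rightarrow> int) \<Rightarrow> real) \<Rightarrow> real" where
  "Exp n m F = (\<Sum>(x, e) \<in> torus n m \<times> signs n. F x e) / real (card (torus n m \<times> signs n))"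

end

theory Submission
  imports Defs
begin

text \<open>Test the inequality on \<open>f x = cos (\<theta> * (\<Sum>i<n. w (x i)))\<close>, where \<open>w\<close> is the
  1-Lipschitz sawtooth on \<open>\<int>\<^sub>2\<^sub>m\<close> with \<open>w (t + m) = - w t\<close>. A shift by \<open>m \<epsilon>\<^sub>S\<close> negates \<open>w\<close>
  on the coordinates in \<open>S\<close>, so the squared difference is a combination of cosines of linear
  forms in \<open>w (x i)\<close>, whose torus averages factor over the coordinates into powers of
  \<open>\<phi> = mean cos (2 \<theta> w)\<close>; Jensen then bounds the left-hand side below by
  \<open>(\<alpha>/m)\<^sup>p (1 + \<phi>\<^sup>n - \<phi>\<^sup>n\<^sup>-\<^sup>k - \<phi>\<^sup>k)\<^sup>p\<^sup>/\<^sup>2\<close>. An edge step changes \<open>f\<close> by at most \<open>\<theta> \<bar>sin\<bar>\<close> of the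
  mean phase, whose square averages to at most \<open>(1 + \<phi>\<^sup>n\<^sup>-\<^sup>1)/2\<close>, and sign steps change it by at
  most 2. With \<open>\<theta> = 4/(m \<surd>k)\<close> one gets \<open>\<phi>\<^sup>k \<le> 1/8\<close>, and if \<open>m < (\<alpha>/3) \<surd>(n/k)\<close> the right-hand side
  is strictly smaller than the left.\<close>

definition sawtooth :: "nat \<Rightarrow> int \<Rightarrow> real" where
  "sawtooth m t = (let r = t mod (2 * int m) in
     if r < int m then real_of_int r - real m / 2 else 3 * real m / 2 - real_of_int r)"

lemma sawtooth_mod: "sawtooth m (t mod (2 * int m)) = sawtooth m t"
  by (simp add: sawtooth_def)

lemma sawtooth_add_half_period:
  assumes "m \<ge> 1" shows "sawtooth m (t + int m) = - sawtooth m t"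
proof -
  define r where "r = t mod (2 * int m)"
  have r: "0 \<le> r" "r < 2 * int m" using assms by (auto simp: r_def)
  have shift: "(t + int m) mod (2 * int m) = (r + int m) mod (2 * int m)"
    by (metis mod_add_left_eq r_def)
  show ?thesis
  proof (cases "r < int m")
    case True
    then have "(r + int m) mod (2 * int m) = r + int m" using r by (intro mod_pos_pos_trivial) auto
    then show ?thesis using True r unfolding sawtooth_def Let_def shift r_def[symmetric] by auto
  next
    case False
    have "(r + int m) mod (2 * int m) = ((r - int m) + 2 * int m) mod (2 * int m)"
      by (simp add: algebra_simps)
    also have "\<dots> = r - int m" using r False by (subst mod_add_self2) (intro mod_pos_pos_trivial, auto)
    finally show ?thesis using False r unfolding sawtooth_def Let_def shift r_def[symmetric] by auto
  qed
qed

lemma sawtooth_add_sign_half_period: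
  assumes "m \<ge> 1" "e \<in> {-1, 1}" shows "sawtooth m (t + int m * e) = - sawtooth m t"
  using assms sawtooth_add_half_period[OF assms(1), of t] sawtooth_add_half_period[OF assms(1), of "t - int m"]
  by auto

lemma abs_sawtooth_step_le:
  assumes "m \<ge> 1" shows "\<bar>sawtooth m (t + 1) - sawtooth m t\<bar> \<le> 1"
proof -
  define r where "r = t mod (2 * int m)"
  have r: "0 \<le> r" "r < 2 * int m" using assms by (auto simp: r_def)
  have shift: "(t + 1) mod (2 * int m) = (r + 1) mod (2 * int m)"
    by (metis mod_add_left_eq r_def)
  show ?thesis
  proof (cases "r + 1 < 2 * int m")
    case True
    then have "(r + 1) mod (2 * int m) = r + 1" using r by (intro mod_pos_pos_trivial) auto
    then show ?thesis using True r unfolding sawtooth_def Let_def shift r_def[symmetric] by auto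
  next
    case False
    then have "r + 1 = 2 * int m" using r by auto
    then have "(r + 1) mod (2 * int m) = 0" by simp
    then show ?thesis using False r unfolding sawtooth_def Let_def shift r_def[symmetric] by auto
  qed
qed

lemma abs_sawtooth_le:
  assumes "m \<ge> 1" shows "\<bar>sawtooth m t\<bar> \<le> real m / 2"
proof -
  define r where "r = t mod (2 * int m)"
  have "0 \<le> r" "r < 2 * int m" using assms by (auto simp: r_def)
  then have "real_of_int r \<ge> 0" "real_of_int r < 2 * real m"
    "r < int m \<longleftrightarrow> real_of_int r < real m" by linarith+
  then show ?thesis unfolding sawtooth_def Let_def r_def[symmetric] by (auto simp: abs_if)
qed

lemma sum_atLeastLessThan_double:
  fixes h :: "int \<Rightarrow> 'a::comm_monoid_add"
  shows "(\<Sum>t\<in>{0..<2 * int m}. h t) = (\<Sum>t\<in>{0..<int m}. h t + h (t + int m))"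
proof -
  have "{0..<2 * int m} = {0..<int m} \<union> {int m..<2 * int m}" by auto
  then have "(\<Sum>t\<in>{0..<2 * int m}. h t) = (\<Sum>t\<in>{0..<int m}. h t) + (\<Sum>t\<in>{int m..<2 * int m}. h t)"
    by (simp add: sum.union_disjoint)
  also have "(\<Sum>t\<in>{int m..<2 * int m}. h t) = (\<Sum>t\<in>{0..<int m}. h (t + int m))"
    by (rule sum.reindex_bij_witness[of _ "\<lambda>t. t + int m" "\<lambda>t. t - int m"]) auto
  finally show ?thesis by (simp add: sum.distrib)
qed

lemma sum_sin_sawtooth:
  assumes "m \<ge> 1" shows "(\<Sum>t\<in>{0..<2 * int m}. sin (c * sawtooth m t)) = 0"
  by (simp add: sum_atLeastLessThan_double sawtooth_add_half_period[OF assms])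

lemma sum_lessThan_shifted_square:
  "(\<Sum>t<N. (real t - c)^2) = real N^3/3 - real N^2/2 + real N/6 - c*(real N^2 - real N) + real N*c^2"
  by (induction N) (simp_all add: power2_eq_square power3_eq_cube field_simps)

lemma sum_sawtooth_square_ge:
  assumes "m \<ge> 1" shows "(\<Sum>t\<in>{0..<2 * int m}. (sawtooth m t)^2) \<ge> real m ^ 3 / 6"
proof -
  have "(\<Sum>t\<in>{0..<2 * int m}. (sawtooth m t)^2) = 2 * (\<Sum>t\<in>{0..<int m}. (sawtooth m t)^2)"
    by (simp add: sum_atLeastLessThan_double sawtooth_add_half_period[OF assms] sum_distrib_left)
  also have "(\<Sum>t\<in>{0..<int m}. (sawtooth m t)^2) = (\<Sum>t<m. (real t - real m / 2)^2)"
    by (rule sum.reindex_bij_witness[of _ "int" "nat"]) (auto simp: sawtooth_def)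
  also have "\<dots> = real m ^3 / 12 + real m / 6"
    unfolding sum_lessThan_shifted_square by (simp add: power2_eq_square power3_eq_cube algebra_simps)
  finally show ?thesis by simp
qed

lemma finite_torus: "finite (torus n m)"
  unfolding torus_def by (auto intro!: finite_PiE)

lemma card_torus: "card (torus n m) = (2 * m) ^ n"
  unfolding torus_def by (simp add: card_PiE nat_mult_distrib power_mult_distrib)

lemma torus_nonempty: "m \<ge> 1 \<Longrightarrow> torus n m \<noteq> {}"
  using card_torus[of n m] by (auto simp: card_eq_0_iff)

lemma card_signs: "card (signs n) = 2 ^ n"
  unfolding signs_def by (simp add: card_PiE numeral_2_eq_2)

lemma cis_sum: "finite A \<Longrightarrow> cis (\<Sum>i\<in>A. f i) = (\<Prod>i\<in>A. cis (f i))"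
  by (induction A rule: finite_induct) (auto simp: cis_mult[symmetric])

lemma sum_torus_cis_separable:
  "(\<Sum>x\<in>torus n m. cis (\<Sum>i<n. h i (x i))) = (\<Prod>i<n. \<Sum>t\<in>{0..<2 * int m}. cis (h i t))"
  unfolding cis_sum[OF finite_lessThan] torus_def by (rule prod_sum_PiE[symmetric]) auto

lemma abs_sum_torus_cos_separable_le:
  "\<bar>\<Sum>x\<in>torus n m. cos (\<Sum>i<n. h i (x i))\<bar> \<le> (\<Prod>i<n. norm (\<Sum>t\<in>{0..<2 * int m}. cis (h i t)))"
proof -
  have "(\<Sum>x\<in>torus n m. cos (\<Sum>i<n. h i (x i))) = Re (\<Prod>i<n. \<Sum>t\<in>{0..<2 * int m}. cis (h i t))"
    by (simp add: Re_sum flip: sum_torus_cis_separable)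
  then show ?thesis using abs_Re_le_cmod by (simp add: prod_norm)
qed

lemma norm_sum_cis_le: "norm (\<Sum>t\<in>{0..<2 * int m}. cis (h t)) \<le> 2 * real m"
  using norm_sum[of "\<lambda>t. cis (h t)" "{0..<2 * int m}"] by simp

definition saw_charfun :: "nat \<Rightarrow> real \<Rightarrow> real" where
  "saw_charfun m c = (\<Sum>t\<in>{0..<2 * int m}. cos (c * sawtooth m t)) / (2 * real m)"

lemma saw_charfun_0: "m \<ge> 1 \<Longrightarrow> saw_charfun m 0 = 1"
  by (simp add: saw_charfun_def)

lemma saw_charfun_uminus: "saw_charfun m (- c) = saw_charfun m c"
  by (simp add: saw_charfun_def)

lemma sum_cis_sawtooth:
  assumes "m \<ge> 1"
  shows "(\<Sum>t\<in>{0..<2 * int m}. cis (c * sawtooth m t)) = of_real (2 * real m * saw_charfun m c)"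
proof -
  have "(\<Sum>t\<in>{0..<2 * int m}. cis (c * sawtooth m t)) = of_real (\<Sum>t\<in>{0..<2 * int m}. cos (c * sawtooth m t))"
    by (rule complex_eqI) (simp_all add: Re_sum Im_sum sum_sin_sawtooth[OF assms])
  then show ?thesis using assms by (simp add: saw_charfun_def)
qed

lemma sum_torus_cos_sawtooth:
  assumes "m \<ge> 1"
  shows "(\<Sum>x\<in>torus n m. cos (\<Sum>i<n. c i * sawtooth m (x i))) = (2 * real m) ^ n * (\<Prod>i<n. saw_charfun m (c i))"
proof -
  have "(\<Sum>x\<in>torus n m. cos (\<Sum>i<n. c i * sawtooth m (x i)))
      = Re (\<Sum>x\<in>torus n m. cis (\<Sum>i<n. c i * sawtooth m (x i)))"
    by (simp add: Re_sum)
  also have "\<dots> = Re (\<Prod>i<n. of_real (2 * real m * saw_charfun m (c i)))"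
    by (subst sum_torus_cis_separable) (simp only: sum_cis_sawtooth[OF assms])
  also have "\<dots> = (2 * real m) ^ n * (\<Prod>i<n. saw_charfun m (c i))"
    by (simp only: of_real_prod[symmetric] Re_complex_of_real prod.distrib) simp
  finally show ?thesis .
qed

lemma abs_sin_ge_cubic: "\<bar>sin (x::real)\<bar> \<ge> \<bar>x\<bar> - \<bar>x\<bar>^3 / 6"
proof -
  have "\<bar>sin x - (\<Sum>m<3. sin_coeff m * x ^ m)\<bar> \<le> inverse (fact 3) * \<bar>x\<bar> ^ 3"
    by (rule Maclaurin_sin_bound)
  moreover have "(\<Sum>m<3. sin_coeff m * x ^ m) = x"
    by (simp add: eval_nat_numeral sin_coeff_def)
  moreover have "inverse (fact 3 :: real) = 1/6" by (simp add: eval_nat_numeral)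
  ultimately have "\<bar>sin x - x\<bar> \<le> \<bar>x\<bar>^3 / 6" by simp
  then show ?thesis by linarith
qed

lemma cos_le_quadratic:
  assumes "\<bar>x::real\<bar> \<le> 4/5" shows "cos x \<le> 1 - 9/20 * x^2"
proof -
  define y where "y = \<bar>x\<bar> / 2"
  have y: "0 \<le> y" "y \<le> 2/5" using assms by (auto simp: y_def)
  have "y^2 \<le> (2/5)^2" using y by (intro power_mono) auto
  then have "y^3 \<le> y * (4/25)"
    using y mult_left_mono[of "y^2" "4/25" y] by (simp add: power3_eq_cube power2_eq_square)
  moreover have "y - y^3/6 \<le> \<bar>sin (x/2)\<bar>"
    using abs_sin_ge_cubic[of "x/2"] by (simp add: y_def)
  ultimately have "y * (73/75) \<le> \<bar>sin (x/2)\<bar>" by simp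
  then have "(y * (73/75))^2 \<le> \<bar>sin (x/2)\<bar>^2"
    using y by (intro power_mono) auto
  then have "y^2 * (5329/5625) \<le> sin (x/2)^2" by (simp add: power_mult_distrib power2_eq_square)
  moreover have "y^2 = x^2/4" by (simp add: y_def power_divide)
  ultimately have "x^2 * (9/40) \<le> sin (x/2)^2"
    using zero_le_power2[of x] by linarith
  then show ?thesis using cos_double_sin[of "x/2"] by simp
qed

lemma saw_charfun_bounds:
  assumes "m \<ge> 1" "\<bar>c\<bar> * real m \<le> 8/5"
  shows "0 \<le> saw_charfun m c" "saw_charfun m c \<le> 1 - 3/80 * c^2 * real m ^ 2"
proof -
  have small: "\<bar>c * sawtooth m t\<bar> \<le> 4/5" for t
  proof -
    have "\<bar>c * sawtooth m t\<bar> \<le> \<bar>c\<bar> * (real m / 2)"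
      unfolding abs_mult by (intro mult_left_mono abs_sawtooth_le assms) auto
    then show ?thesis using assms by simp
  qed
  have "cos (c * sawtooth m t) \<ge> 0" for t
    using small[of t] pi_gt3 by (intro cos_ge_zero) auto
  then show "0 \<le> saw_charfun m c"
    unfolding saw_charfun_def by (intro divide_nonneg_nonneg sum_nonneg) auto
  have "(\<Sum>t\<in>{0..<2 * int m}. cos (c * sawtooth m t))
      \<le> (\<Sum>t\<in>{0..<2 * int m}. 1 - 9/20 * (c^2 * (sawtooth m t)^2))"
    using cos_le_quadratic[OF small] by (intro sum_mono) (simp add: power_mult_distrib)
  also have "\<dots> = 2 * real m - 9/20 * c^2 * (\<Sum>t\<in>{0..<2 * int m}. (sawtooth m t)^2)"
    by (simp add: sum_subtractf sum_distrib_left mult.assoc)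
  also have "\<dots> \<le> 2 * real m - 9/20 * c^2 * (real m ^ 3 / 6)"
    using sum_sawtooth_square_ge[OF assms(1)] by (intro diff_left_mono mult_left_mono) auto
  finally show "saw_charfun m c \<le> 1 - 3/80 * c^2 * real m ^ 2"
    using assms(1) unfolding saw_charfun_def
    by (simp add: divide_simps power3_eq_cube power2_eq_square) (simp add: algebra_simps)
qed

lemma norm_sum_cis_sawtooth:
  assumes "m \<ge> 1" "\<bar>c\<bar> * real m \<le> 8/5"
  shows "norm (\<Sum>t\<in>{0..<2 * int m}. cis (c * sawtooth m t)) = 2 * real m * saw_charfun m c"
proof -
  have "norm (\<Sum>t\<in>{0..<2 * int m}. cis (c * sawtooth m t)) = \<bar>2 * real m * saw_charfun m c\<bar>"
    by (simp only: sum_cis_sawtooth[OF assms(1)] norm_of_real)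
  then show ?thesis using saw_charfun_bounds(1)[OF assms] by simp
qed

lemma powr_ge_tangent:
  fixes y M q :: real
  assumes "0 \<le> y" "0 < M" "1 \<le> q"
  shows "M powr q + q * M powr (q - 1) * (y - M) \<le> y powr q"
proof (cases "y = 0")
  case True
  have h: "M powr (q - 1) * M = M powr q" using assms by (simp add: powr_diff field_simps)
  have "q * M powr (q - 1) * (y - M) = - (q * (M powr (q - 1) * M))" using True by (simp add: algebra_simps)
  also have "\<dots> = - q * M powr q" by (simp only: h)
  finally have tangent_at_0: "q * M powr (q - 1) * (y - M) = - q * M powr q" .
  have "1 * M powr q \<le> q * M powr q" using assms by (intro mult_right_mono) auto
  moreover have "y powr q = 0" using True by simp
  ultimately show ?thesis unfolding tangent_at_0 by linarith
next
  case False
  then have "q * M powr (q - 1) * (y - M) \<le> y powr q - M powr q"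
    using assms
    by (intro convex_on_imp_above_tangent[where A = "{0<..}"] powr_convex
          has_real_derivative_powr[THEN has_field_derivative_at_within])
       (auto simp: interior_open)
  then show ?thesis by simp
qed

lemma powr_mean_le_mean_powr:
  fixes y :: "'a \<Rightarrow> real"
  assumes "finite X" "X \<noteq> {}" "\<And>x. x \<in> X \<Longrightarrow> 0 \<le> y x" "1 \<le> q"
  shows "((\<Sum>x\<in>X. y x) / card X) powr q \<le> (\<Sum>x\<in>X. y x powr q) / card X"
proof -
  define M where "M = (\<Sum>x\<in>X. y x) / card X"
  have card_pos: "real (card X) > 0" using assms by (simp add: card_gt_0_iff)
  have "M \<ge> 0" unfolding M_def using assms by (intro divide_nonneg_nonneg sum_nonneg) auto
  show ?thesis
  proof (cases "M = 0")
    case True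
    then show ?thesis unfolding M_def[symmetric] using assms by (auto intro!: divide_nonneg_nonneg sum_nonneg)
  next
    case False
    with \<open>M \<ge> 0\<close> have "M > 0" by simp
    have "(\<Sum>x\<in>X. M powr q + q * M powr (q - 1) * (y x - M)) \<le> (\<Sum>x\<in>X. y x powr q)"
      using assms \<open>M > 0\<close> by (intro sum_mono powr_ge_tangent) auto
    moreover have "(\<Sum>x\<in>X. M powr q + q * M powr (q - 1) * (y x - M))
       = card X * M powr q + q * M powr (q - 1) * ((\<Sum>x\<in>X. y x) - card X * M)"
      by (simp add: sum.distrib sum_distrib_left[symmetric] sum_subtractf)
    moreover have "(\<Sum>x\<in>X. y x) - card X * M = 0" using card_pos by (simp add: M_def)
    ultimately have "card X * M powr q \<le> (\<Sum>x\<in>X. y x powr q)" by simp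
    then show ?thesis using card_pos unfolding M_def[symmetric] by (simp add: field_simps)
  qed
qed

lemma abs_powr_eq_square_powr:
  assumes "0 < p" shows "\<bar>d::real\<bar> powr p = (d^2) powr (p/2)"
proof (cases "d = 0")
  case False
  then have "d^2 = \<bar>d\<bar> powr 2" by (simp add: powr_numeral)
  then have "(d^2) powr (p/2) = (\<bar>d\<bar> powr 2) powr (p/2)" by (simp only:)
  also have "\<dots> = \<bar>d\<bar> powr p" by (subst powr_powr) simp
  finally show ?thesis by simp
qed (use assms in simp)

lemma Exp_sign_independent:
  assumes "\<And>x e. x \<in> torus n m \<Longrightarrow> e \<in> signs n \<Longrightarrow> G x e = F x"
  shows "Exp n m G = (\<Sum>x\<in>torus n m. F x) / card (torus n m)"
proof -
  have "(\<Sum>(x, e) \<in> torus n m \<times> signs n. G x e) = (\<Sum>x\<in>torus n m. \<Sum>e\<in>signs n. G x e)"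
    by (rule sum.cartesian_product[symmetric])
  also have "\<dots> = (\<Sum>x\<in>torus n m. card (signs n) * F x)"
    using assms by (intro sum.cong) auto
  finally show ?thesis unfolding Exp_def
    by (simp add: card_cartesian_product sum_distrib_left[symmetric] card_signs)
qed

lemma Exp_le:
  assumes "m \<ge> 1" "\<And>x e. x \<in> torus n m \<Longrightarrow> e \<in> signs n \<Longrightarrow> G x e \<le> B"
  shows "Exp n m G \<le> B"
proof -
  have card_pos: "real (card (torus n m \<times> signs n)) > 0"
    using assms(1) by (simp add: card_cartesian_product card_torus card_signs)
  have "(\<Sum>(x, e) \<in> torus n m \<times> signs n. G x e) \<le> (\<Sum>(x, e) \<in> torus n m \<times> signs n. B)"
    using assms(2) by (intro sum_mono) auto
  then show ?thesis unfolding Exp_def using card_pos by (simp add: divide_simps mult.commute)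
qed

definition cos_test :: "nat \<Rightarrow> nat \<Rightarrow> real \<Rightarrow> (nat \<Rightarrow> int) \<Rightarrow> real" where
  "cos_test n m \<theta> x = cos (\<theta> * (\<Sum>i<n. sawtooth m (x i)))"

lemma cos_test_addm: "cos_test n m \<theta> (addm n m x y) = cos (\<theta> * (\<Sum>i<n. sawtooth m (x i + y i)))"
  unfolding cos_test_def addm_def by (simp add: sawtooth_mod)

lemma Exp_cos_test_sign_step_le:
  assumes "m \<ge> 1" "p \<ge> 0"
  shows "Exp n m (\<lambda>x e. \<bar>cos_test n m \<theta> (addm n m x e) - cos_test n m \<theta> x\<bar> powr p) \<le> 2 powr p"
proof (rule Exp_le[OF assms(1)])
  fix x e
  have "\<bar>cos_test n m \<theta> (addm n m x e) - cos_test n m \<theta> x\<bar> \<le> 2"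
    unfolding cos_test_def using cos_le_one cos_ge_minus_one by (smt (verit))
  then show "\<bar>cos_test n m \<theta> (addm n m x e) - cos_test n m \<theta> x\<bar> powr p \<le> 2 powr p"
    using assms by (intro powr_mono2) auto
qed

text \<open>Since \<open>cos a - cos b = 2 sin ((a + b)/2) sin ((b - a)/2)\<close>, the second factor is at most
  \<open>\<theta>\<close>, and \<open>p \<ge> 2\<close> lets \<open>\<bar>sin\<bar>\<^sup>p\<close> be replaced by \<open>sin\<^sup>2 = (1 - cos)/2\<close>.\<close>

lemma abs_cos_diff_powr_le:
  fixes \<theta> u v p :: real
  assumes "0 \<le> \<theta>" "\<bar>u - v\<bar> \<le> 1" "2 \<le> p"
  shows "\<bar>cos (\<theta> * u) - cos (\<theta> * v)\<bar> powr p \<le> \<theta> powr p * ((1 - cos (\<theta> * u + \<theta> * v)) / 2)"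
proof -
  define Y where "Y = (\<theta> * u + \<theta> * v) / 2"
  have "\<bar>cos (\<theta> * u) - cos (\<theta> * v)\<bar> = \<bar>sin Y\<bar> * (2 * \<bar>sin ((\<theta> * v - \<theta> * u) / 2)\<bar>)"
    unfolding cos_diff_cos Y_def by (simp add: abs_mult)
  also have "\<dots> \<le> \<bar>sin Y\<bar> * \<theta>"
  proof (intro mult_left_mono)
    have "2 * \<bar>sin ((\<theta> * v - \<theta> * u) / 2)\<bar> \<le> \<theta> * \<bar>u - v\<bar>"
      using abs_sin_x_le_abs_x[of "(\<theta> * v - \<theta> * u) / 2"] assms(1)
      by (simp add: abs_mult right_diff_distrib[symmetric] abs_minus_commute)
    also have "\<dots> \<le> \<theta>" using assms by (simp add: mult_left_le)
    finally show "2 * \<bar>sin ((\<theta> * v - \<theta> * u) / 2)\<bar> \<le> \<theta>" .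
  qed simp
  finally have "\<bar>cos (\<theta> * u) - cos (\<theta> * v)\<bar> powr p \<le> (\<theta> * \<bar>sin Y\<bar>) powr p"
    using assms(3) by (intro powr_mono2) (auto simp: mult.commute)
  also have "\<dots> = \<theta> powr p * \<bar>sin Y\<bar> powr p" using assms(1) by (simp add: powr_mult)
  also have "\<bar>sin Y\<bar> powr p \<le> \<bar>sin Y\<bar> powr 2"
    using assms(3) by (intro powr_mono') auto
  also have "\<bar>sin Y\<bar> powr 2 = (1 - cos (2 * Y)) / 2"
    using cos_double_sin[of Y] by simp
  also have "2 * Y = \<theta> * u + \<theta> * v" by (simp add: Y_def)
  finally show ?thesis using assms(1) by (simp add: mult_left_mono)
qed

lemma prod_lessThan_if_mem:
  assumes "S \<subseteq> {..<n}" shows "(\<Prod>i<n. if i \<in> S then a else b) = a ^ card S * b ^ (n - card S)"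
proof -
  have "(\<Prod>i<n. if i \<in> S then a else b) = (\<Prod>i\<in>{..<n} \<inter> {i. i \<in> S}. a) * (\<Prod>i\<in>{..<n} \<inter> - {i. i \<in> S}. b)"
    by (rule prod.If_cases) auto
  moreover have "{..<n} \<inter> {i. i \<in> S} = S" using assms by auto
  moreover have "{..<n} \<inter> - {i. i \<in> S} = {..<n} - S" by auto
  moreover have "card ({..<n} - S) = n - card S" using assms by (simp add: card_Diff_subset finite_subset)
  ultimately show ?thesis by simp
qed

lemma abs_sum_torus_cos_basis_phase_le:
  assumes m: "m \<ge> 1" and j: "j < n" and \<theta>: "0 \<le> \<theta>" "2 * \<theta> * real m \<le> 8/5"
  shows "\<bar>\<Sum>x\<in>torus n m. cos (\<Sum>i<n. \<theta> * (sawtooth m (x i + basisv j i) + sawtooth m (x i)))\<bar>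
    \<le> (2 * real m) ^ n * saw_charfun m (2 * \<theta>) ^ (n - 1)"
proof -
  define h where "h i t = \<theta> * (sawtooth m (t + basisv j i) + sawtooth m t)" for i t
  define \<phi> where "\<phi> = saw_charfun m (2 * \<theta>)"
  have "\<bar>\<Sum>x\<in>torus n m. cos (\<Sum>i<n. h i (x i))\<bar> \<le> (\<Prod>i<n. norm (\<Sum>t\<in>{0..<2 * int m}. cis (h i t)))"
    by (rule abs_sum_torus_cos_separable_le)
  also have "\<dots> \<le> (\<Prod>i<n. if i \<in> {j} then 2 * real m else 2 * real m * \<phi>)"
  proof (intro prod_mono conjI)
    fix i
    show "norm (\<Sum>t\<in>{0..<2 * int m}. cis (h i t)) \<le> (if i \<in> {j} then 2 * real m else 2 * real m * \<phi>)"
    proof (cases "i = j")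
      case False
      then have "h i = (\<lambda>t. (2 * \<theta>) * sawtooth m t)" by (auto simp: h_def basisv_def fun_eq_iff)
      then show ?thesis using False norm_sum_cis_sawtooth[OF m, of "2 * \<theta>"] \<theta> by (simp add: \<phi>_def)
    qed (simp add: norm_sum_cis_le)
  qed simp
  also have "\<dots> = (2 * real m) ^ n * \<phi> ^ (n - 1)"
  proof -
    from j obtain n' where "n = Suc n'" by (cases n) auto
    with j show ?thesis by (subst prod_lessThan_if_mem) (auto simp: power_mult_distrib)
  qed
  finally show ?thesis by (simp add: h_def \<phi>_def)
qed

lemma Exp_cos_test_basis_step_le:
  assumes m: "m \<ge> 1" and j: "j < n" and \<theta>: "0 \<le> \<theta>" "2 * \<theta> * real m \<le> 8/5" and p: "2 \<le> p"
  shows "Exp n m (\<lambda>x e. \<bar>cos_test n m \<theta> (addm n m x (basisv j)) - cos_test n m \<theta> x\<bar> powr p)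
     \<le> \<theta> powr p * (1 + saw_charfun m (2 * \<theta>) ^ (n - 1)) / 2"
proof -
  define phase where "phase x = (\<Sum>i<n. \<theta> * (sawtooth m (x i + basisv j i) + sawtooth m (x i)))" for x
  have card_torus_real: "real (card (torus n m)) = (2 * real m) ^ n" by (simp add: card_torus)
  have pointwise: "\<bar>cos_test n m \<theta> (addm n m x (basisv j)) - cos_test n m \<theta> x\<bar> powr p
      \<le> \<theta> powr p * ((1 - cos (phase x)) / 2)" for x
  proof -
    define u where "u = (\<Sum>i<n. sawtooth m (x i + basisv j i))"
    define v where "v = (\<Sum>i<n. sawtooth m (x i))"
    have "u - v = (\<Sum>i<n. if i = j then sawtooth m (x j + 1) - sawtooth m (x j) else 0)"
      unfolding u_def v_def sum_subtractf[symmetric] by (intro sum.cong) (auto simp: basisv_def)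
    then have "\<bar>u - v\<bar> \<le> 1" using j abs_sawtooth_step_le[OF m] by simp
    moreover have "phase x = \<theta> * u + \<theta> * v"
      by (simp add: phase_def u_def v_def sum.distrib sum_distrib_left distrib_left)
    ultimately show ?thesis using abs_cos_diff_powr_le[OF \<theta>(1) _ p, of u v]
      unfolding cos_test_addm by (simp add: cos_test_def flip: u_def v_def)
  qed
  have cos_sum_ge: "- (\<Sum>x\<in>torus n m. cos (phase x)) \<le> (2 * real m) ^ n * saw_charfun m (2 * \<theta>) ^ (n - 1)"
    using abs_sum_torus_cos_basis_phase_le[OF m j \<theta>] unfolding phase_def by linarith
  have "Exp n m (\<lambda>x e. \<bar>cos_test n m \<theta> (addm n m x (basisv j)) - cos_test n m \<theta> x\<bar> powr p)
     \<le> (\<Sum>x\<in>torus n m. \<theta> powr p * ((1 - cos (phase x)) / 2)) / card (torus n m)"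
    by (subst Exp_sign_independent[OF refl]) (intro divide_right_mono sum_mono pointwise, simp)
  also have "\<dots> = \<theta> powr p / 2 * (card (torus n m) - (\<Sum>x\<in>torus n m. cos (phase x))) / card (torus n m)"
    by (simp add: sum_subtractf sum_divide_distrib[symmetric] sum_distrib_left right_diff_distrib
        diff_divide_distrib mult.commute)
  also have "\<dots> \<le> \<theta> powr p / 2 * ((2 * real m) ^ n * (1 + saw_charfun m (2 * \<theta>) ^ (n - 1))) / card (torus n m)"
    using cos_sum_ge by (intro divide_right_mono mult_left_mono) (auto simp: card_torus_real algebra_simps)
  finally show ?thesis using m by (simp add: card_torus_real)
qed

definition saw_form :: "nat \<Rightarrow> nat \<Rightarrow> nat set \<Rightarrow> real \<Rightarrow> real \<Rightarrow> (nat \<Rightarrow> int) \<Rightarrow> real" where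
  "saw_form n m S a b x = (\<Sum>i<n. (if i \<in> S then a else b) * sawtooth m (x i))"

lemma saw_form_add: "saw_form n m S a b x + saw_form n m S c d x = saw_form n m S (a + c) (b + d) x"
  unfolding saw_form_def by (simp add: sum.distrib[symmetric]) (intro sum.cong, auto simp: algebra_simps)

lemma saw_form_diff: "saw_form n m S a b x - saw_form n m S c d x = saw_form n m S (a - c) (b - d) x"
  unfolding saw_form_def by (simp add: sum_subtractf[symmetric]) (intro sum.cong, auto simp: algebra_simps)

lemma saw_form_scale: "r * saw_form n m S a b x = saw_form n m S (r * a) (r * b) x"
  unfolding saw_form_def by (simp add: sum_distrib_left) (intro sum.cong, auto)

lemma sum_torus_cos_saw_form:
  assumes "m \<ge> 1" "S \<subseteq> {..<n}"
  shows "(\<Sum>x\<in>torus n m. cos (saw_form n m S a b x))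
    = (2 * real m) ^ n * (saw_charfun m a ^ card S * saw_charfun m b ^ (n - card S))"
proof -
  have "(\<Sum>x\<in>torus n m. cos (saw_form n m S a b x))
      = (2 * real m) ^ n * (\<Prod>i<n. saw_charfun m (if i \<in> S then a else b))"
    unfolding saw_form_def by (rule sum_torus_cos_sawtooth[OF assms(1)])
  also have "(\<Prod>i<n. saw_charfun m (if i \<in> S then a else b)) = (\<Prod>i<n. if i \<in> S then saw_charfun m a else saw_charfun m b)"
    by (intro prod.cong) auto
  finally show ?thesis by (simp only: prod_lessThan_if_mem[OF assms(2)])
qed

lemma cos_diff_cos_square:
  "(cos (y::real) - cos z)^2 = 1 + cos (2*y)/2 + cos (2*z)/2 - cos (y - z) - cos (y + z)"
proof -
  have "(cos y - cos z)^2 = cos y ^2 + cos z ^2 - 2 * (cos y * cos z)"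
    by (simp add: power2_eq_square algebra_simps)
  then show ?thesis using cos_double_cos[of y] cos_double_cos[of z] cos_times_cos[of y z]
    by (simp add: field_simps)
qed

lemma sum_torus_cos_saw_form_diff_square:
  fixes \<theta> :: real
  assumes m: "m \<ge> 1" and S: "S \<subseteq> {..<n}" "card S = k"
  defines "\<phi> \<equiv> saw_charfun m (2 * \<theta>)"
  shows "(\<Sum>x\<in>torus n m. (cos (saw_form n m S (-\<theta>) \<theta> x) - cos (saw_form n m S \<theta> \<theta> x))^2)
    = (2 * real m) ^ n * (1 + \<phi> ^ n - \<phi> ^ (n - k) - \<phi> ^ k)"
proof -
  have "k \<le> n" using S card_mono[OF _ S(1)] by auto
  then have "\<phi> ^ k * \<phi> ^ (n - k) = \<phi> ^ n" by (simp flip: power_add)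
  moreover have "saw_charfun m (-2 * \<theta>) = \<phi>" using saw_charfun_uminus[of m "2 * \<theta>"] by (simp add: \<phi>_def)
  moreover have "(cos (saw_form n m S (-\<theta>) \<theta> x) - cos (saw_form n m S \<theta> \<theta> x))^2
      = 1 + cos (saw_form n m S (-2*\<theta>) (2*\<theta>) x)/2 + cos (saw_form n m S (2*\<theta>) (2*\<theta>) x)/2
        - cos (saw_form n m S (-2*\<theta>) 0 x) - cos (saw_form n m S 0 (2*\<theta>) x)" for x
    unfolding cos_diff_cos_square saw_form_scale saw_form_add saw_form_diff by (simp add: algebra_simps)
  then have "(\<Sum>x\<in>torus n m. (cos (saw_form n m S (-\<theta>) \<theta> x) - cos (saw_form n m S \<theta> \<theta> x))^2)
      = card (torus n m) + (\<Sum>x\<in>torus n m. cos (saw_form n m S (-2*\<theta>) (2*\<theta>) x))/2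
        + (\<Sum>x\<in>torus n m. cos (saw_form n m S (2*\<theta>) (2*\<theta>) x))/2
        - (\<Sum>x\<in>torus n m. cos (saw_form n m S (-2*\<theta>) 0 x)) - (\<Sum>x\<in>torus n m. cos (saw_form n m S 0 (2*\<theta>) x))"
    by (simp add: sum.distrib sum_subtractf sum_divide_distrib)
  ultimately show ?thesis
    unfolding sum_torus_cos_saw_form[OF m S(1)] card_torus S(2) saw_charfun_0[OF m] \<phi>_def[symmetric]
    by (simp add: algebra_simps)
qed

lemma cos_test_add_antipodal:
  assumes "m \<ge> 1" "e \<in> signs n"
  shows "cos_test n m \<theta> (addm n m x (\<lambda>i. int m * epsS S e i)) = cos (saw_form n m S (-\<theta>) \<theta> x)"
proof -
  have "\<theta> * sawtooth m (x i + int m * epsS S e i) = (if i \<in> S then - \<theta> else \<theta>) * sawtooth m (x i)"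
    if "i < n" for i
  proof (cases "i \<in> S")
    case True
    have "e i \<in> {-1, 1}" using assms(2) that unfolding signs_def by (auto simp: PiE_iff)
    then show ?thesis using True sawtooth_add_sign_half_period[OF assms(1)] by (simp add: epsS_def)
  qed (simp add: epsS_def)
  then show ?thesis unfolding cos_test_addm saw_form_def sum_distrib_left
    by (auto intro!: arg_cong[where f = cos] sum.cong)
qed

lemma Exp_cos_test_antipodal_step_ge:
  fixes \<theta> p :: real
  assumes m: "m \<ge> 1" and S: "S \<subseteq> {..<n}" "card S = k" and p: "2 \<le> p"
  defines "\<phi> \<equiv> saw_charfun m (2 * \<theta>)"
  shows "(1 + \<phi> ^ n - \<phi> ^ (n - k) - \<phi> ^ k) powr (p / 2)
    \<le> Exp n m (\<lambda>x e. \<bar>cos_test n m \<theta> (addm n m x (\<lambda>i. int m * epsS S e i)) - cos_test n m \<theta> x\<bar> powr p)"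
proof -
  define D where "D x = cos (saw_form n m S (-\<theta>) \<theta> x) - cos (saw_form n m S \<theta> \<theta> x)" for x
  have card_torus_real: "real (card (torus n m)) = (2 * real m) ^ n" by (simp add: card_torus)
  have "(1 + \<phi> ^ n - \<phi> ^ (n - k) - \<phi> ^ k) powr (p / 2)
      = ((\<Sum>x\<in>torus n m. (D x)^2) / card (torus n m)) powr (p / 2)"
    using m unfolding D_def sum_torus_cos_saw_form_diff_square[OF m S] card_torus_real \<phi>_def by simp
  also have "\<dots> \<le> (\<Sum>x\<in>torus n m. ((D x)^2) powr (p / 2)) / card (torus n m)"
    using p m by (intro powr_mean_le_mean_powr finite_torus torus_nonempty) auto
  also have "\<dots> = (\<Sum>x\<in>torus n m. \<bar>D x\<bar> powr p) / card (torus n m)"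
    using p by (simp add: abs_powr_eq_square_powr)
  also have "\<dots> = Exp n m (\<lambda>x e. \<bar>cos_test n m \<theta> (addm n m x (\<lambda>i. int m * epsS S e i)) - cos_test n m \<theta> x\<bar> powr p)"
    by (rule Exp_sign_independent[symmetric]) (simp only: D_def cos_test_add_antipodal[OF m], simp add: cos_test_def saw_form_def sum_distrib_left)
  finally show ?thesis .
qed

lemma cos_test_lhs_ge:
  fixes \<alpha> \<theta> p :: real
  assumes m: "m \<ge> 1" and "k \<le> n" "0 \<le> \<alpha>" "2 \<le> p"
  defines "\<phi> \<equiv> saw_charfun m (2 * \<theta>)"
  shows "(\<alpha> / real m) powr p * (1 + \<phi> ^ n - \<phi> ^ (n - k) - \<phi> ^ k) powr (p / 2)
    \<le> \<alpha> powr p / real (n choose k) * (\<Sum>S \<in> {S. S \<subseteq> {..<n} \<and> card S = k}.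
          Exp n m (\<lambda>x e. \<bar>cos_test n m \<theta> (addm n m x (\<lambda>i. int m * epsS S e i)) - cos_test n m \<theta> x\<bar> powr p)
          / real m powr p)"
proof -
  let ?Q = "(1 + \<phi> ^ n - \<phi> ^ (n - k) - \<phi> ^ k) powr (p / 2)"
  have "card {S. S \<subseteq> {..<n} \<and> card S = k} = n choose k"
    using n_subsets[of "{..<n}" k] by simp
  then have "real (n choose k) * ?Q
      \<le> (\<Sum>S \<in> {S. S \<subseteq> {..<n} \<and> card S = k}.
          Exp n m (\<lambda>x e. \<bar>cos_test n m \<theta> (addm n m x (\<lambda>i. int m * epsS S e i)) - cos_test n m \<theta> x\<bar> powr p))"
    using sum_mono[of "{S. S \<subseteq> {..<n} \<and> card S = k}" "\<lambda>_. ?Q"] Exp_cos_test_antipodal_step_ge[OF m _ _ assms(4)]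
    by (simp add: \<phi>_def)
  moreover have "0 < real (n choose k)" "0 < real m powr p" using assms by auto
  ultimately show ?thesis using assms(3)
    by (simp add: powr_divide sum_divide_distrib[symmetric] field_simps mult_left_mono)
qed

lemma cos_test_rhs_le:
  fixes \<theta> p :: real
  assumes m: "m \<ge> 1" and "0 < n" and \<theta>: "0 \<le> \<theta>" "2 * \<theta> * real m \<le> 8/5" and p: "2 \<le> p"
  defines "\<phi> \<equiv> saw_charfun m (2 * \<theta>)"
  shows "real k / real n * (\<Sum>j<n. Exp n m (\<lambda>x e. \<bar>cos_test n m \<theta> (addm n m x (basisv j)) - cos_test n m \<theta> x\<bar> powr p))
      + (real k / real n) powr (p / 2) * Exp n m (\<lambda>x e. \<bar>cos_test n m \<theta> (addm n m x e) - cos_test n m \<theta> x\<bar> powr p)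
    \<le> real k * (\<theta> powr p * (1 + \<phi> ^ (n - 1)) / 2) + (real k / real n) powr (p / 2) * 2 powr p"
proof -
  have "(\<Sum>j<n. Exp n m (\<lambda>x e. \<bar>cos_test n m \<theta> (addm n m x (basisv j)) - cos_test n m \<theta> x\<bar> powr p))
      \<le> (\<Sum>j<n. \<theta> powr p * (1 + \<phi> ^ (n - 1)) / 2)"
    unfolding \<phi>_def by (intro sum_mono Exp_cos_test_basis_step_le[OF m _ \<theta> p]) simp
  then have "real k / real n * (\<Sum>j<n. Exp n m (\<lambda>x e. \<bar>cos_test n m \<theta> (addm n m x (basisv j)) - cos_test n m \<theta> x\<bar> powr p))
      \<le> real k / real n * (real n * (\<theta> powr p * (1 + \<phi> ^ (n - 1)) / 2))"
    by (intro mult_left_mono) auto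
  also have "\<dots> = real k * (\<theta> powr p * (1 + \<phi> ^ (n - 1)) / 2)" using \<open>0 < n\<close> by simp
  finally have "real k / real n * (\<Sum>j<n. Exp n m (\<lambda>x e. \<bar>cos_test n m \<theta> (addm n m x (basisv j)) - cos_test n m \<theta> x\<bar> powr p))
      \<le> real k * (\<theta> powr p * (1 + \<phi> ^ (n - 1)) / 2)" .
  moreover have "Exp n m (\<lambda>x e. \<bar>cos_test n m \<theta> (addm n m x e) - cos_test n m \<theta> x\<bar> powr p) \<le> 2 powr p"
    using p by (intro Exp_cos_test_sign_step_le[OF m]) simp
  ultimately show ?thesis by (smt (verit) mult_left_mono powr_ge_zero)
qed

lemma exp_12_5_gt_8: "8 < exp (12/5 :: real)"
proof -
  have "(13/10 :: real) ^ 8 \<le> exp (3/10) ^ 8"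
    using exp_ge_add_one_self[of "3/10::real"] by (intro power_mono) auto
  also have "exp (3/10 :: real) ^ 8 = exp (12/5)" by (simp flip: exp_of_nat_mult)
  finally show ?thesis by (simp add: eval_nat_numeral)
qed

lemma test_parameter_bounds:
  fixes \<theta> :: real
  assumes m: "m \<ge> 1" and k: "25 \<le> real k"
  defines "\<theta> \<equiv> 4 / (real m * sqrt (real k))" and "\<phi> \<equiv> saw_charfun m (2 * \<theta>)"
  shows "0 \<le> \<theta>" "2 * \<theta> * real m \<le> 8/5" "0 \<le> \<phi>" "\<phi> \<le> 1" "\<phi> ^ k \<le> 1/8"
proof -
  have "5 \<le> sqrt (real k)" using real_sqrt_le_mono[OF k] by simp
  then have c: "\<bar>2 * \<theta>\<bar> * real m = 8 / sqrt (real k)" "8 / sqrt (real k) \<le> 8/5"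
    using m by (auto simp: divide_simps \<theta>_def)
  then show "0 \<le> \<theta>" "2 * \<theta> * real m \<le> 8/5" by (auto simp: \<theta>_def)
  have "(2 * \<theta>)^2 * real m ^ 2 = 64 / real k"
    using m k by (simp add: \<theta>_def power_divide power_mult_distrib)
  then have "\<phi> \<le> 1 - 12 / (5 * real k)"
    using saw_charfun_bounds(2)[OF m, of "2 * \<theta>"] c by (simp add: \<phi>_def mult.assoc)
  moreover show "0 \<le> \<phi>" using saw_charfun_bounds(1)[OF m] c by (simp add: \<phi>_def)
  moreover have "0 \<le> 12 / (5 * real k)" by simp
  ultimately show "\<phi> \<le> 1" by linarith
  have "\<phi> ^ k \<le> exp (- (12 / (5 * real k))) ^ k"
    using \<open>0 \<le> \<phi>\<close> \<open>\<phi> \<le> 1 - 12 / (5 * real k)\<close> exp_ge_add_one_self[of "- (12 / (5 * real k))"]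
    by (intro power_mono) auto
  also have "\<dots> = 1 / exp (12/5)" using k by (simp add: exp_minus field_simps flip: exp_of_nat_mult)
  also have "\<dots> \<le> 1/8" using exp_12_5_gt_8 by (simp add: divide_simps)
  finally show "\<phi> ^ k \<le> 1/8" .
qed

lemma one_plus_power_minus_powers_ge:
  fixes \<phi> :: real
  assumes "0 \<le> \<phi>" "\<phi> \<le> 1" "\<phi> ^ k \<le> 1/8" "3 * k \<le> n"
  shows "55/64 \<le> 1 + \<phi> ^ n - \<phi> ^ (n - k) - \<phi> ^ k"
proof -
  have "\<phi> ^ (n - k) \<le> \<phi> ^ (2 * k)" using assms by (intro power_decreasing) auto
  also have "\<dots> = (\<phi> ^ k)^2" by (simp add: power_mult[symmetric] mult.commute)
  also have "\<dots> \<le> (1/8)^2" using assms by (intro power_mono) auto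
  finally have "\<phi> ^ (n - k) \<le> 1/64" by (simp add: power2_eq_square)
  then show ?thesis using assms(3) zero_le_power[OF assms(1), of n] by linarith
qed

lemma large_k_consequences:
  fixes p \<alpha> :: real
  assumes p: "2 < p" and \<alpha>: "0 < \<alpha>" "\<alpha> < 1" and "m \<ge> 1" "1 \<le> k"
    and K: "(5 / \<alpha>) powr (2 * p / (p - 2)) \<le> real k"
  shows "25 \<le> real k" "real k * (4 / (real m * sqrt (real k))) powr p \<le> (4/5) powr p * (\<alpha> / real m) powr p"
proof -
  have "2 \<le> 2 * p / (p - 2)" using p by (simp add: divide_simps)
  then have "(5::real) powr 2 \<le> (5 / \<alpha>) powr (2 * p / (p - 2))"
    using \<alpha> by (intro order.trans[OF powr_mono powr_mono2]) (auto simp: divide_simps)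
  then show "25 \<le> real k" using K by simp
  have "((5/\<alpha>) powr (2*p/(p-2))) powr ((p-2)/2) \<le> real k powr ((p-2)/2)"
    using K p by (intro powr_mono2) auto
  moreover have "2*p/(p-2) * ((p-2)/2) = p" using p by (simp add: field_simps)
  ultimately have Kp: "(5/\<alpha>) powr p \<le> real k powr ((p-2)/2)" by (simp add: powr_powr)
  have k: "real k > 0" using \<open>1 \<le> k\<close> by simp
  have "sqrt (real k) powr p = (real k powr (1/2)) powr p" by (simp add: powr_half_sqrt)
  also have "\<dots> = real k powr (1 + (p-2)/2)" by (simp add: powr_powr field_simps)
  also have "\<dots> = real k * real k powr ((p-2)/2)" using k by (simp add: powr_add)
  finally have sqrt_k: "sqrt (real k) powr p = real k * real k powr ((p-2)/2)" .
  have "real k * (4 / (real m * sqrt (real k))) powr p = 4 powr p / (real m powr p * real k powr ((p-2)/2))"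
    using k \<open>m \<ge> 1\<close> by (simp add: powr_divide powr_mult sqrt_k)
  also have "\<dots> \<le> 4 powr p / (real m powr p * (5/\<alpha>) powr p)"
    using Kp k \<alpha> \<open>m \<ge> 1\<close> by (intro divide_left_mono mult_left_mono mult_pos_pos) auto
  also have "\<dots> = (4/5) powr p * (\<alpha> / real m) powr p"
    using \<alpha> \<open>m \<ge> 1\<close> by (simp add: powr_divide powr_mult field_simps)
  finally show "real k * (4 / (real m * sqrt (real k))) powr p \<le> (4/5) powr p * (\<alpha> / real m) powr p" .
qed

lemma small_m_consequences:
  fixes p \<alpha> :: real
  assumes p: "0 < p" and \<alpha>: "0 < \<alpha>" "\<alpha> < 1" and "m \<ge> 1" "1 \<le> k"
    and small_m: "real m < \<alpha> / 3 * sqrt (real n / real k)"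
  shows "9 * k < n" "(real k / real n) powr (p / 2) * 2 powr p < (2/3) powr p * (\<alpha> / real m) powr p"
proof -
  have "3 * real m / \<alpha> < sqrt (real n / real k)" using small_m \<alpha> by (simp add: field_simps)
  then have ratio: "(3 * real m / \<alpha>)^2 < real n / real k"
    using \<alpha> power_strict_mono[of "3 * real m / \<alpha>" "sqrt (real n / real k)" 2] by simp
  have "3^2 \<le> (3 * real m / \<alpha>)^2"
    using \<alpha> \<open>m \<ge> 1\<close> by (intro power_mono) (auto simp: divide_simps)
  then have "9 < real n / real k" using ratio by simp
  then have "9 * real k < real n" using \<open>1 \<le> k\<close> by (simp add: field_simps)
  then show "9 * k < n" by linarith
  have "real k / real n < (\<alpha> / (3 * real m))^2"
    using ratio \<alpha> \<open>m \<ge> 1\<close> \<open>1 \<le> k\<close> by (simp add: power_divide divide_simps) (simp add: algebra_simps)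
  then have "(real k / real n) powr (p / 2) < ((\<alpha> / (3 * real m))^2) powr (p / 2)"
    using p \<open>1 \<le> k\<close> by (intro powr_less_mono2) auto
  also have "\<dots> = (\<alpha> / (3 * real m)) powr p"
    using \<alpha> \<open>m \<ge> 1\<close> abs_powr_eq_square_powr[OF p, of "\<alpha> / (3 * real m)"] by simp
  finally have "(real k / real n) powr (p / 2) * 2 powr p < (\<alpha> / (3 * real m)) powr p * 2 powr p"
    by simp
  also have "\<dots> = (\<alpha> / (3 * real m) * 2) powr p"
    by (rule powr_mult[symmetric])
  also have "\<dots> = (2/3 * (\<alpha> / real m)) powr p"
    by (simp add: algebra_simps)
  also have "\<dots> = (2/3) powr p * (\<alpha> / real m) powr p"
    by (rule powr_mult)
  finally show "(real k / real n) powr (p / 2) * 2 powr p < (2/3) powr p * (\<alpha> / real m) powr p" .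
qed

lemma mixture_powr_less:
  fixes Q p :: real
  assumes Q: "55/64 \<le> Q" and p: "2 < p"
  shows "9/16 * (4/5) powr p + (2/3) powr p < Q powr (p / 2)"
proof -
  define q where "q = p / 2"
  have q: "1 < q" using p by (simp add: q_def)
  have ratio: "a powr q \<le> a * Q powr (q - 1)" if "0 < a" "a \<le> Q" for a
  proof -
    have "a powr q = a * a powr (q - 1)" using that by (simp add: powr_diff field_simps)
    also have "\<dots> \<le> a * Q powr (q - 1)" using that q by (intro mult_left_mono powr_mono2) auto
    finally show ?thesis .
  qed
  have "(4/5 :: real) powr p = (16/25) powr q" "(2/3 :: real) powr p = (4/9) powr q"
    using abs_powr_eq_square_powr[of p "4/5"] abs_powr_eq_square_powr[of p "2/3"] p
    by (simp_all add: q_def power2_eq_square)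
  then have "9/16 * (4/5) powr p + (2/3) powr p \<le> (9/16 * (16/25) + 4/9) * Q powr (q - 1)"
    using ratio[of "16/25"] ratio[of "4/9"] Q by (simp add: algebra_simps)
  also have "\<dots> < Q * Q powr (q - 1)" using Q by (intro mult_strict_right_mono) auto
  also have "\<dots> = Q powr q" using Q by (simp add: powr_diff field_simps)
  finally show ?thesis by (simp add: q_def)
qed

theorem mainTheorem2:
  fixes p \<alpha> :: real and m n k :: nat
  assumes "p > 2" and "0 < \<alpha>" and "\<alpha> < 1" and "m \<ge> 1" and "1 \<le> k" and "k \<le> n"
    and H: "\<forall>f :: (nat \<Rightarrow> int) \<Rightarrow> real.
      \<alpha> powr p / real (n choose k) *
        (\<Sum>S \<in> {S. S \<subseteq> {..<n} \<and> card S = k}.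
          Exp n m (\<lambda>x e. \<bar>f (addm n m x (\<lambda>i. int m * epsS S e i)) - f x\<bar> powr p) / real m powr p)
      \<le> real k / real n * (\<Sum>j<n. Exp n m (\<lambda>x e. \<bar>f (addm n m x (basisv j)) - f x\<bar> powr p))
        + (real k / real n) powr (p / 2) * Exp n m (\<lambda>x e. \<bar>f (addm n m x e) - f x\<bar> powr p)"
  shows "real k \<ge> (5 / \<alpha>) powr (2 * p / (p - 2)) \<longrightarrow> real m \<ge> \<alpha> / 3 * sqrt (real n / real k)"
proof (intro impI, rule ccontr)
  assume K: "real k \<ge> (5 / \<alpha>) powr (2 * p / (p - 2))" and "\<not> real m \<ge> \<alpha> / 3 * sqrt (real n / real k)"
  then have small_m: "real m < \<alpha> / 3 * sqrt (real n / real k)" by simp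
  define \<theta> where "\<theta> = 4 / (real m * sqrt (real k))"
  define \<phi> where "\<phi> = saw_charfun m (2 * \<theta>)"
  define Q where "Q = 1 + \<phi> ^ n - \<phi> ^ (n - k) - \<phi> ^ k"
  have k: "25 \<le> real k" and k_\<theta>: "real k * \<theta> powr p \<le> (4/5) powr p * (\<alpha> / real m) powr p"
    using large_k_consequences[OF assms(1-5) K] by (simp_all add: \<theta>_def)
  have n: "9 * k < n" and k_n: "(real k / real n) powr (p / 2) * 2 powr p < (2/3) powr p * (\<alpha> / real m) powr p"
    using small_m_consequences[OF _ assms(2-5) small_m, of p] assms(1) by auto
  have \<theta>: "0 \<le> \<theta>" "2 * \<theta> * real m \<le> 8/5" and \<phi>: "0 \<le> \<phi>" "\<phi> \<le> 1" "\<phi> ^ k \<le> 1/8"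
    using test_parameter_bounds[OF assms(4) k] by (simp_all add: \<theta>_def \<phi>_def)
  have "\<phi> ^ (n - 1) \<le> \<phi> ^ k" using \<phi> n by (intro power_decreasing) auto
  with \<phi>(3) have \<phi>_n: "\<phi> ^ (n - 1) \<le> 1/8" by linarith
  have Q: "55/64 \<le> Q" using one_plus_power_minus_powers_ge[OF \<phi>, of n] n unfolding Q_def by simp
  have "(\<alpha> / real m) powr p * Q powr (p / 2)
      \<le> real k * (\<theta> powr p * (1 + \<phi> ^ (n - 1)) / 2) + (real k / real n) powr (p / 2) * 2 powr p"
    using cos_test_lhs_ge[OF assms(4,6), of \<alpha> p \<theta>] H[rule_format, of "cos_test n m \<theta>"]
      cos_test_rhs_le[OF assms(4) _ \<theta>, of n p k] assms(1,2) n
    unfolding Q_def \<phi>_def by linarith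
  also have "\<dots> < 9/16 * ((4/5) powr p * (\<alpha> / real m) powr p) + (2/3) powr p * (\<alpha> / real m) powr p"
  proof -
    have "real k * (\<theta> powr p * (1 + \<phi> ^ (n - 1)) / 2) \<le> 9/16 * (real k * \<theta> powr p)"
      using mult_left_mono[of "(1 + \<phi> ^ (n - 1)) / 2" "9/16" "real k * \<theta> powr p"] \<phi>_n
      by (simp add: algebra_simps)
    then show ?thesis using k_\<theta> k_n by linarith
  qed
  also have "\<dots> = (\<alpha> / real m) powr p * (9/16 * (4/5) powr p + (2/3) powr p)"
    by (simp add: algebra_simps)
  also have "\<dots> < (\<alpha> / real m) powr p * Q powr (p / 2)"
    using mixture_powr_less[OF Q assms(1)] assms(2,4) by (intro mult_strict_left_mono) auto
  finally have "(\<alpha> / real m) powr p * Q powr (p / 2) < (\<alpha> / real m) powr p * Q powr (p / 2)" .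
  then show False by simp
qed

end
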